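(* Let $n\ge1$, let $z_1,\dots,z_n\in\mathbb{C}$ be pairwise distinct, let $k_1,\dots,k_n\ge 0$ be integers, let $\beta_1,\dots,\beta_n\in\mathbb{C}\setminus\{0\}$ and $\alpha_i^{(j)}\in\mathbb{C}\setminus\{0\}$ ($j=1,\dots,n$, $i=1,\dots,k_j$), and set $m=\sum_{j=1}^n(k_j+1)$. Let $Z=J_{1,k_1}\oplus\cdots\oplus J_{n,k_n}\in\mathbb{C}^{m\times m}$, where $J_{j,k_j}\in\mathbb{C}^{(k_j+1)\times(k_j+1)}$ is upper bidiagonal with diagonal entries $z_j$ and superdiagonal entries, from top to bottom, $\alpha_{k_j}^{(j)},\dots,\alpha_1^{(j)}$, and let $w=\begin{bmatrix}\beta_1 e_{k_1+1}^\top&\cdots&\beta_n e_{k_n+1}^\top\end{bmatrix}^\top$ with $e_{k_j+1}=(0,\dots,0,1)^\top\in\mathbb{R}^{k_j+1}$. Define on polynomials the inner product $$\langle p,q\rangle_S=\sum_{j=1}^n|\beta_j|^2\sum_{r=0}^{k_j}\left|\frac{\prod_{i=1}^r\alpha_i^{(j)}}{r!}\right|^2\overline{q^{(r)}(z_j)}\,p^{(r)}(z_j).$$ Let $k<m$ and let $Q_k=[q_1,\dots,q_k]\in\mathbb{C}^{m\times k}$ be a nested orthonormal basis for $\mathcal{K}_k(Z,w)$, with Hessenberg matrix $H_k\in\mathbb{C}^{k\times k}$, scalar $h_{k+1,k}>0$ and vector $q_{k+1}\in\mathbb{C}^m$ with $q_{k+1}^HQ_k=0$ such that $$ZQ_k=Q_kH_k+h_{k+1,k}\,q_{k+1}e_k^\top.$$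 Then the polynomials $p_0,\dots,p_k$ defined by $p_{\ell}(Z)w=q_{\ell+1}$, $p_\ell\in\mathcal{P}_\ell$, form a sequence of Sobolev orthonormal polynomials for $\langle\cdot,\cdot\rangle_S$, and they satisfy the recurrence relation $$z\begin{bmatrix}p_0(z)&\cdots&p_{k-1}(z)\end{bmatrix}=\begin{bmatrix}p_0(z)&\cdots&p_{k-1}(z)\end{bmatrix}H_k+h_{k+1,k}\,p_k(z)\,e_k^\top.$$ Conversely, if $p_0,\dots,p_k$ is a sequence of Sobolev orthonormal polynomials for $\langle\cdot,\cdot\rangle_S$ satisfying this recurrence with a Hessenberg matrix $H_k$ and $h_{k+1,k}>0$, then $q_{\ell+1}:=p_\ell(Z)w$ ($\ell=0,\dots,k$) give a nested orthonormal basis $Q_k=[q_1,\dots,q_k]$ of $\mathcal{K}_k(Z,w)$ with $ZQ_k=Q_kH_k+h_{k+1,k}q_{k+1}e_k^\top$.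
   Context: $\mathcal{P}_\ell$ is the space of complex polynomials of degree at most $\ell$ ($\mathcal{P}_{-1}=\{0\}$). $\mathcal{K}_k(A,v)=\mathrm{span}\{v,Av,\dots,A^{k-1}v\}$. A matrix $Q_k=[q_1,\dots,q_k]$ is a nested orthonormal basis for $\mathcal{K}_k(A,v)$ if $Q_k^HQ_k=I$ and $\mathrm{span}\{q_1,\dots,q_i\}=\mathcal{K}_i(A,v)$ for $i=1,\dots,k$. A Hessenberg matrix $H$ has $h_{i,j}=0$ whenever $i-1>j$. A sequence $\{p_\ell\}$ is a sequence of Sobolev orthonormal polynomials for $\langle\cdot,\cdot\rangle_S$ if $p_\ell\in\mathcal{P}_\ell\setminus\mathcal{P}_{\ell-1}$ and $\langle p_k,p_\ell\rangle_S=\delta_{k\ell}$. $e_k$ is the $k$th standard unit vector of $\mathbb{R}^k$. *)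

theory Defs
  imports "HOL-Computational_Algebra.Polynomial" "Jordan_Normal_Form.Schur_Decomposition"
begin

definition poly_mat :: "complex poly \<Rightarrow> complex mat \<Rightarrow> complex mat" where
  "poly_mat p A = foldr (\<lambda>c B. c \<cdot>\<^sub>m 1\<^sub>m (dim_row A) + A * B) (coeffs p) (0\<^sub>m (dim_row A) (dim_row A))"

definition Pspace :: "int \<Rightarrow> complex poly set" where
  "Pspace d = {p. p = 0 \<or> int (degree p) \<le> d}"

definition span_list :: "nat \<Rightarrow> complex vec list \<Rightarrow> complex vec set" where
  "span_list m vs = {mat_of_cols m vs *\<^sub>v c | c. c \<in> carrier_vec (length vs)}"

definition krylov :: "complex mat \<Rightarrow> complex vec \<Rightarrow> nat \<Rightarrow> complex vec set" where
  "krylov A v i = span_list (dim_vec v) (map (\<lambda>t. (A ^\<^sub>m t) *\<^sub>v v) [0..<i])"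

definition nested_onb :: "complex mat \<Rightarrow> complex mat \<Rightarrow> complex vec \<Rightarrow> nat \<Rightarrow> bool" where
  "nested_onb Q A v k \<longleftrightarrow> Q \<in> carrier_mat (dim_vec v) k \<and> mat_adjoint Q * Q = 1\<^sub>m k \<and>
     (\<forall>i\<in>{1..k}. span_list (dim_vec v) (map (col Q) [0..<i]) = krylov A v i)"

(* Hessenberg: h_{i,j} = 0 whenever i - 1 > j (0-based indices here, same condition) *)
definition hessenberg :: "complex mat \<Rightarrow> bool" where
  "hessenberg H \<longleftrightarrow> (\<forall>i<dim_row H. \<forall>j<dim_col H. i > j + 1 \<longrightarrow> H $$ (i, j) = 0)"

definition sob_m :: "nat \<Rightarrow> (nat \<Rightarrow> nat) \<Rightarrow> nat" where
  "sob_m n kk = (\<Sum>j=1..n. kk j + 1)"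

(* J_{j,k_j}: upper bidiagonal (k_j+1)x(k_j+1), diagonal z_j, superdiagonal from top to bottom
   alpha_{k_j}^{(j)}, ..., alpha_1^{(j)} (row r, 0-based, carries alpha_{k_j - r}^{(j)}) *)
definition sob_J :: "(nat \<Rightarrow> complex) \<Rightarrow> (nat \<Rightarrow> nat) \<Rightarrow> (nat \<Rightarrow> nat \<Rightarrow> complex) \<Rightarrow> nat \<Rightarrow> complex mat" where
  "sob_J z kk \<alpha> j = mat (kk j + 1) (kk j + 1)
     (\<lambda>(r, c). if r = c then z j else if c = r + 1 then \<alpha> j (kk j - r) else 0)"

definition sob_Z :: "nat \<Rightarrow> (nat \<Rightarrow> complex) \<Rightarrow> (nat \<Rightarrow> nat) \<Rightarrow> (nat \<Rightarrow> nat \<Rightarrow> complex) \<Rightarrow> complex mat" where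
  "sob_Z n z kk \<alpha> = diag_block_mat (map (sob_J z kk \<alpha>) [1..<n+1])"

definition sob_w :: "nat \<Rightarrow> (nat \<Rightarrow> nat) \<Rightarrow> (nat \<Rightarrow> complex) \<Rightarrow> complex vec" where
  "sob_w n kk \<beta> = vec_of_list (concat (map (\<lambda>j. replicate (kk j) 0 @ [\<beta> j]) [1..<n+1]))"

definition sob_ip :: "nat \<Rightarrow> (nat \<Rightarrow> complex) \<Rightarrow> (nat \<Rightarrow> nat) \<Rightarrow> (nat \<Rightarrow> complex) \<Rightarrow> (nat \<Rightarrow> nat \<Rightarrow> complex)
     \<Rightarrow> complex poly \<Rightarrow> complex poly \<Rightarrow> complex" where
  "sob_ip n z kk \<beta> \<alpha> p q = (\<Sum>j=1..n. complex_of_real ((cmod (\<beta> j))\<^sup>2) *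
     (\<Sum>r=0..kk j. complex_of_real ((cmod ((\<Prod>i=1..r. \<alpha> j i) / of_nat (fact r)))\<^sup>2) *
        cnj (poly ((pderiv ^^ r) q) (z j)) * poly ((pderiv ^^ r) p) (z j)))"

definition sobolev_orthonormal :: "(complex poly \<Rightarrow> complex poly \<Rightarrow> complex) \<Rightarrow> (nat \<Rightarrow> complex poly) \<Rightarrow> nat \<Rightarrow> bool" where
  "sobolev_orthonormal ip p k \<longleftrightarrow>
     (\<forall>l\<le>k. p l \<in> Pspace (int l) - Pspace (int l - 1)) \<and>
     (\<forall>a\<le>k. \<forall>b\<le>k. ip (p a) (p b) = (if a = b then 1 else 0))"

definition poly_recurrence :: "(nat \<Rightarrow> complex poly) \<Rightarrow> complex mat \<Rightarrow> real \<Rightarrow> nat \<Rightarrow> bool" where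
  "poly_recurrence p H h k \<longleftrightarrow> (\<forall>x::complex. \<forall>c<k.
     x * poly (p c) x = (\<Sum>i<k. poly (p i) x * H $$ (i, c)) + (if c = k - 1 then complex_of_real h * poly (p k) x else 0))"

definition arnoldi_rel :: "complex mat \<Rightarrow> complex mat \<Rightarrow> complex mat \<Rightarrow> real \<Rightarrow> complex vec \<Rightarrow> nat \<Rightarrow> bool" where
  "arnoldi_rel Z Q H h q k \<longleftrightarrow>
     Z * Q = Q * H + complex_of_real h \<cdot>\<^sub>m (mat_of_cols (dim_vec q) [q] * mat_of_rows k [unit_vec k (k - 1)])"

end

(*
  The map p |-> p(Z) w is linear, sends x p to Z (p(Z) w), and maps the polynomials of degree
  below i onto the Krylov space K_i(Z, w). If w has grade m, i.e. p(Z) w is nonzero for every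
  nonzero p of degree below m, this map is injective on the polynomials of degree at most k < m.
  Then the columns of a nested orthonormal Krylov basis are the images of polynomials
  p_0, ..., p_k that are orthonormal for <p, q> = (q(Z) w)^H p(Z) w, and the Arnoldi relation,
  pulled back through the map, is exactly the recurrence; conversely, orthonormal polynomials
  satisfying the recurrence are mapped to an orthonormal Krylov basis satisfying the Arnoldi
  relation.

  For the bidiagonal Z and the vector w of the corollary, the block of p(Z) w belonging to z_j
  lists beta_j (alpha_1 ... alpha_r / r!) p^(r)(z_j) for r = k_j, ..., 0; this is the Leibniz rule
  (x p)^(r) = x p^(r) + r p^(r-1) in matrix form. Hence <p, q> is the Sobolev inner product, and
  p(Z) w = 0 makes every z_j a root of p of multiplicity greater than k_j, which is impossible for
  a nonzero p of degree below m = (k_1 + 1) + ... + (k_n + 1).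
*)

theory Submission
  imports Defs
begin

lemma Pspace_pred_eq: "Pspace (int L - 1) = {p. p = 0 \<or> degree p < L}"
  by (auto simp: Pspace_def)

lemma higher_pderiv_pCons_0:
  fixes p :: "'a :: {comm_semiring_1,semiring_no_zero_divisors} poly"
  shows "(pderiv ^^ Suc r) (pCons 0 p) = pCons 0 ((pderiv ^^ Suc r) p) + smult (of_nat (Suc r)) ((pderiv ^^ r) p)"
proof (induction r)
  case 0
  show ?case by (simp add: pderiv_pCons add.commute)
next
  case (Suc r)
  have "(pderiv ^^ Suc (Suc r)) (pCons 0 p) = pderiv (pCons 0 ((pderiv ^^ Suc r) p) + smult (of_nat (Suc r)) ((pderiv ^^ r) p))"
    using Suc by simp
  also have "\<dots> = pCons 0 ((pderiv ^^ Suc (Suc r)) p) + smult (1 + of_nat (Suc r)) ((pderiv ^^ Suc r) p)"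
    by (simp add: pderiv_add pderiv_smult pderiv_pCons smult_add_left algebra_simps)
  finally show ?case by (simp add: add.commute)
qed

lemma poly_higher_pderiv_pCons_0:
  fixes p :: "'a :: {comm_semiring_1,semiring_no_zero_divisors} poly"
  shows "poly ((pderiv ^^ Suc r) (pCons 0 p)) x = x * poly ((pderiv ^^ Suc r) p) x + of_nat (Suc r) * poly ((pderiv ^^ r) p) x"
  by (simp only: higher_pderiv_pCons_0) simp

lemma higher_pderiv_Suc_1 [simp]: "(pderiv ^^ Suc r) 1 = 0"
  by (simp only: funpow_Suc_right comp_apply pderiv_1 higher_pderiv_0)

lemma order_gt_if_higher_pderivs_vanish:
  fixes p :: "'a :: {idom,semiring_char_0} poly"
  assumes "p \<noteq> 0" and "\<forall>r\<le>K. poly ((pderiv ^^ r) p) a = 0"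
  shows "K < order a p"
  using assms
proof (induction K arbitrary: p)
  case 0
  then show ?case by (simp add: order_root)
next
  case (Suc K)
  have root: "poly p a = 0" using Suc.prems(2) by auto
  have "pderiv p \<noteq> 0"
  proof
    assume "pderiv p = 0"
    then obtain c where "p = [:c:]" by (auto simp: pderiv_eq_0_iff elim: degree_eq_zeroE)
    then show False using Suc.prems(1) root by simp
  qed
  moreover have "\<forall>r\<le>K. poly ((pderiv ^^ r) (pderiv p)) a = 0"
    using Suc.prems(2) by (metis Suc_le_mono comp_apply funpow_Suc_right)
  ultimately have "K < order a (pderiv p)" by (rule Suc.IH)
  then show ?case using order_pderiv[OF Suc.prems(1) root] by simp
qed

lemma lincombs_exact_degree_eq_degree_less:
  fixes g :: "nat \<Rightarrow> 'a :: field poly"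
  assumes "\<forall>t<L. g t \<noteq> 0 \<and> degree (g t) = t"
  shows "{\<Sum>t<L. smult (c t) (g t) | c. True} = {p. p = 0 \<or> degree p < L}"
  using assms
proof (induction L)
  case 0
  show ?case by auto
next
  case (Suc L)
  have gL: "coeff (g L) L \<noteq> 0" "degree (g L) = L"
    using Suc.prems leading_coeff_neq_0[of "g L"] by auto
  show ?case
  proof (intro equalityI subsetI)
    fix p :: "'a poly" assume "p \<in> {\<Sum>t<Suc L. smult (c t) (g t) | c. True}"
    then obtain c where "p = (\<Sum>t<Suc L. smult (c t) (g t))" by blast
    moreover have "degree \<dots> \<le> L"
      using Suc.prems by (intro degree_sum_le) (auto intro: order.trans[OF degree_smult_le])
    ultimately show "p \<in> {p. p = 0 \<or> degree p < Suc L}" by simp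
  next
    fix p :: "'a poly" assume p: "p \<in> {p. p = 0 \<or> degree p < Suc L}"
    define a where "a = coeff p L / coeff (g L) L"
    define r where "r = p - smult a (g L)"
    have "coeff r L = 0" using gL by (simp add: a_def r_def)
    moreover have "degree r \<le> L"
      using p gL unfolding r_def by (intro degree_diff_le) auto
    ultimately have "r = 0 \<or> degree r < L"
      by (metis le_neq_implies_less leading_coeff_0_iff)
    then obtain c where c: "r = (\<Sum>t<L. smult (c t) (g t))"
      using Suc by auto
    have "(\<Sum>t<L. smult ((c(L := a)) t) (g t)) = r"
      unfolding c by (intro sum.cong) auto
    then have "p = (\<Sum>t<Suc L. smult ((c(L := a)) t) (g t))"
      by (simp add: r_def)
    then show "p \<in> {\<Sum>t<Suc L. smult (c t) (g t) | c. True}" by blast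
  qed
qed

lemma Pspace_diff_iff: "p \<in> Pspace (int l) - Pspace (int l - 1) \<longleftrightarrow> p \<noteq> 0 \<and> degree p = l"
  by (auto simp: Pspace_def)

definition recurrence_rhs :: "(nat \<Rightarrow> complex poly) \<Rightarrow> complex mat \<Rightarrow> real \<Rightarrow> nat \<Rightarrow> nat \<Rightarrow> complex poly" where
  "recurrence_rhs p H h k c =
     (\<Sum>t<k. smult (H $$ (t, c)) (p t)) + (if c = k - 1 then smult (complex_of_real h) (p k) else 0)"

lemma poly_recurrence_iff:
  "poly_recurrence p H h k \<longleftrightarrow> (\<forall>c<k. pCons 0 (p c) = recurrence_rhs p H h k c)"
proof -
  have rhs: "poly (recurrence_rhs p H h k c) x =
      (\<Sum>t<k. poly (p t) x * H $$ (t, c)) + (if c = k - 1 then complex_of_real h * poly (p k) x else 0)" for c x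
    by (simp add: recurrence_rhs_def poly_sum mult.commute)
  have "(\<forall>x. x * poly (p c) x = poly (recurrence_rhs p H h k c) x) \<longleftrightarrow> pCons 0 (p c) = recurrence_rhs p H h k c" for c
    using poly_eq_poly_eq_iff[of "pCons 0 (p c)" "recurrence_rhs p H h k c"] by (auto simp: fun_eq_iff)
  then show ?thesis
    unfolding poly_recurrence_def rhs[symmetric] by blast
qed

lemma degree_recurrence_rhs_le:
  assumes "\<forall>l\<le>k. p l \<in> Pspace (int l)"
  shows "degree (recurrence_rhs p H h k c) \<le> k"
proof -
  have deg: "degree (p t) \<le> k" if "t \<le> k" for t
    using assms that by (auto simp: Pspace_def)
  have "degree (\<Sum>t<k. smult (H $$ (t, c)) (p t)) \<le> k"
    using deg by (intro degree_sum_le) (auto intro: order.trans[OF degree_smult_le])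
  moreover have "degree (if c = k - 1 then smult (complex_of_real h) (p k) else 0) \<le> k"
    using deg[of k] by auto
  ultimately show ?thesis
    unfolding recurrence_rhs_def by (rule degree_add_le)
qed

lemma poly_mat_carrier:
  assumes "A \<in> carrier_mat d d"
  shows "poly_mat p A \<in> carrier_mat d d"
proof -
  have "foldr (\<lambda>c B. c \<cdot>\<^sub>m 1\<^sub>m (dim_row A) + A * B) cs (0\<^sub>m (dim_row A) (dim_row A)) \<in> carrier_mat d d" for cs
    using assms by (induction cs) auto
  then show ?thesis unfolding poly_mat_def .
qed

lemma poly_mat_pCons:
  assumes A: "A \<in> carrier_mat d d"
  shows "poly_mat (pCons a p) A = a \<cdot>\<^sub>m 1\<^sub>m d + A * poly_mat p A"
proof (cases "p = 0 \<and> a = 0")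
  case True
  then show ?thesis using A by (intro eq_matI) (auto simp: poly_mat_def)
next
  case False
  then have "coeffs (pCons a p) = a # coeffs p" by (auto simp: cCons_def)
  then show ?thesis using A unfolding poly_mat_def by simp
qed

lemma mat_of_cols_mult_vec_index:
  assumes "set vs \<subseteq> carrier_vec d" "c \<in> carrier_vec (length vs)" "i < d"
  shows "(mat_of_cols d vs *\<^sub>v c) $ i = (\<Sum>t<length vs. vs ! t $ i * c $ t)"
  using assms by (simp add: scalar_prod_def mat_of_cols_def row_def atLeast0LessThan)

lemma nth_mem_span_list:
  assumes "set vs \<subseteq> carrier_vec d" "l < length vs"
  shows "vs ! l \<in> span_list d vs"
proof -
  have vs_l: "vs ! l \<in> carrier_vec d" using assms by auto
  have "mat_of_cols d vs *\<^sub>v unit_vec (length vs) l = vs ! l"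
  proof (rule eq_vecI)
    fix i assume "i < dim_vec (vs ! l)"
    then have i: "i < d" using vs_l by simp
    have "(mat_of_cols d vs *\<^sub>v unit_vec (length vs) l) $ i = (\<Sum>t<length vs. vs ! t $ i * unit_vec (length vs) l $ t)"
      using assms i by (intro mat_of_cols_mult_vec_index) auto
    also have "\<dots> = vs ! l $ i"
      using assms(2) by (simp add: unit_vec_def if_distrib cong: if_cong)
    finally show "(mat_of_cols d vs *\<^sub>v unit_vec (length vs) l) $ i = vs ! l $ i" .
  qed (use vs_l in auto)
  then show ?thesis unfolding span_list_def by (metis (mono_tags, lifting) mem_Collect_eq unit_vec_carrier)
qed

lemma mat_of_cols_mult_vec_cinner:
  fixes vs :: "complex vec list"
  assumes "set vs \<subseteq> carrier_vec d" "c \<in> carrier_vec (length vs)" "u \<in> carrier_vec d"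
  shows "(mat_of_cols d vs *\<^sub>v c) \<bullet>c u = (\<Sum>t<length vs. c $ t * (vs ! t \<bullet>c u))"
proof -
  have "(mat_of_cols d vs *\<^sub>v c) \<bullet>c u = (\<Sum>i<d. (\<Sum>t<length vs. vs ! t $ i * c $ t) * conjugate (u $ i))"
    using assms by (auto simp: scalar_prod_def atLeast0LessThan mat_of_cols_index intro!: sum.cong)
  also have "\<dots> = (\<Sum>t<length vs. c $ t * (\<Sum>i<d. vs ! t $ i * conjugate (u $ i)))"
    by (simp add: sum_distrib_left sum_distrib_right ac_simps sum.swap[of _ "{..<d}"])
  also have "\<dots> = (\<Sum>t<length vs. c $ t * (vs ! t \<bullet>c u))"
    using assms by (intro sum.cong) (auto simp: scalar_prod_def atLeast0LessThan)
  finally show ?thesis .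
qed

lemma index_mat_adjoint_mult:
  assumes "Q \<in> carrier_mat m k" "a < k" "b < k"
  shows "(mat_adjoint Q * Q) $$ (a, b) = col Q b \<bullet>c col Q a"
proof -
  have "(mat_adjoint Q * Q) $$ (a, b) = conjugate (col Q a) \<bullet> col Q b"
    using assms by (simp add: mat_adjoint_def)
  also have "\<dots> = col Q b \<bullet>c col Q a"
    using assms by (intro comm_scalar_prod[of _ m]) auto
  finally show ?thesis .
qed

lemma arnoldi_vecs_orthonormal:
  assumes Q: "Q \<in> carrier_mat m k" "mat_adjoint Q * Q = 1\<^sub>m k"
    and q: "q \<in> carrier_vec m" "q \<bullet>c q = 1" "mat_adjoint (mat_of_cols m [q]) * Q = 0\<^sub>m 1 k"
    and "a \<le> k" "b \<le> k"
  shows "(if a < k then col Q a else q) \<bullet>c (if b < k then col Q b else q) = (if a = b then 1 else 0)"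
proof -
  have q_perp: "conjugate q \<bullet> col Q c = 0" if "c < k" for c
  proof -
    have "conjugate q \<bullet> col Q c = (mat_adjoint (mat_of_cols m [q]) * Q) $$ (0, c)"
      using that Q q(1) by (simp add: mat_adjoint_def)
    also have "\<dots> = 0" using q(3) that by simp
    finally show ?thesis .
  qed
  have col_perp: "col Q c \<bullet>c q = 0" if "c < k" for c
    using q_perp[OF that] Q q that by (subst comm_scalar_prod[of _ m]) auto
  have "q \<bullet>c col Q c = 0" if "c < k" for c
    using q_perp[OF that] Q q that conjugate_conjugate_sprod[of q m "col Q c"] by simp
  moreover have "col Q b \<bullet>c col Q a = (if a = b then 1 else 0)" if "a < k" "b < k" for a b
    using index_mat_adjoint_mult[OF Q(1) that] Q(2) that by auto
  ultimately show ?thesis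
    using assms(6,7) col_perp q(2) by (auto simp: not_less)
qed

lemma col_arnoldi_correction:
  fixes q :: "complex vec"
  assumes "q \<in> carrier_vec m" "c < k"
  shows "col (complex_of_real h \<cdot>\<^sub>m (mat_of_cols m [q] * mat_of_rows k [unit_vec k (k - 1)])) c =
    (if c = k - 1 then complex_of_real h \<cdot>\<^sub>v q else 0\<^sub>v m)"
  using assms by (intro eq_vecI) (auto simp: scalar_prod_def mat_of_cols_def mat_of_rows_def)

lemma arnoldi_rel_iff_cols:
  assumes Z: "Z \<in> carrier_mat m m" and Q: "Q \<in> carrier_mat m k" and H: "H \<in> carrier_mat k k"
    and q: "q \<in> carrier_vec m"
  shows "arnoldi_rel Z Q H h q k \<longleftrightarrow>
    (\<forall>c<k. Z *\<^sub>v col Q c = Q *\<^sub>v col H c + (if c = k - 1 then complex_of_real h \<cdot>\<^sub>v q else 0\<^sub>v m))"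
    (is "_ \<longleftrightarrow> (\<forall>c<k. ?col c)")
proof -
  let ?R = "complex_of_real h \<cdot>\<^sub>m (mat_of_cols m [q] * mat_of_rows k [unit_vec k (k - 1)])"
  have R: "?R \<in> carrier_mat m k" using q by auto
  have cols: "col (Z * Q) c = col (Q * H + ?R) c \<longleftrightarrow> ?col c" if "c < k" for c
  proof -
    have "col (Q * H + ?R) c = col (Q * H) c + col ?R c"
      using Q H R that by (intro col_add[of _ m k]) auto
    also have "\<dots> = Q *\<^sub>v col H c + (if c = k - 1 then complex_of_real h \<cdot>\<^sub>v q else 0\<^sub>v m)"
      by (simp only: col_mult2[OF Q H that] col_arnoldi_correction[OF q that])
    finally show ?thesis
      by (simp only: col_mult2[OF Z Q that])
  qed
  show ?thesis
    unfolding arnoldi_rel_def carrier_vecD[OF q]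
  proof
    assume "Z * Q = Q * H + ?R"
    then show "\<forall>c<k. ?col c" using cols by simp
  next
    assume "\<forall>c<k. ?col c"
    then show "Z * Q = Q * H + ?R"
      using Z Q H R cols by (intro mat_col_eqI) auto
  qed
qed

lemma mat_eq_mat_of_cols:
  assumes "Q \<in> carrier_mat m k" "\<forall>l<k. col Q l = v l"
  shows "Q = mat_of_cols m (map v [0..<k])"
proof (rule mat_col_eqI)
  fix i assume "i < dim_col (mat_of_cols m (map v [0..<k]))"
  then have "i < k" by simp
  moreover have "col Q i \<in> carrier_vec m" using assms(1) by (auto intro: carrier_vecI)
  ultimately show "col Q i = col (mat_of_cols m (map v [0..<k])) i" using assms(2) by simp
qed (use assms(1) in auto)

lemma vec_of_list_append: "vec_of_list (xs @ ys) = vec_of_list xs @\<^sub>v vec_of_list ys"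
  by (metis list_of_vec_append list_vec vec_list)

lemma conjugate_append_vec: "conjugate (v @\<^sub>v w) = conjugate v @\<^sub>v conjugate (w :: complex vec)"
  by (rule eq_vecI) auto

section \<open>Krylov spaces as images of polynomials\<close>

locale krylov_setup =
  fixes Z :: "complex mat" and w :: "complex vec" and m :: nat
  assumes Z_carrier: "Z \<in> carrier_mat m m" and w_carrier: "w \<in> carrier_vec m"
begin

definition krylov_vec :: "complex poly \<Rightarrow> complex vec" where
  "krylov_vec p = poly_mat p Z *\<^sub>v w"

lemma krylov_vec_carrier [simp]: "krylov_vec p \<in> carrier_vec m"
  unfolding krylov_vec_def by (rule mult_mat_vec_carrier[OF poly_mat_carrier[OF Z_carrier] w_carrier])

lemma dim_krylov_vec [simp]: "dim_vec (krylov_vec p) = m"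
  using krylov_vec_carrier[of p] by (rule carrier_vecD)

lemma krylov_vec_0 [simp]: "krylov_vec 0 = 0\<^sub>v m"
  using Z_carrier w_carrier by (intro eq_vecI) (auto simp: krylov_vec_def poly_mat_def)

lemma krylov_vec_pCons: "krylov_vec (pCons a p) = a \<cdot>\<^sub>v w + Z *\<^sub>v krylov_vec p"
  using Z_carrier w_carrier poly_mat_carrier[OF Z_carrier, of p]
  by (simp add: krylov_vec_def poly_mat_pCons[OF Z_carrier] add_mult_distrib_mat_vec[of _ m m])
    (intro eq_vecI, auto)

lemma krylov_vec_1 [simp]: "krylov_vec 1 = w"
  using krylov_vec_pCons[of 1 0] w_carrier Z_carrier by (simp add: one_pCons) (intro eq_vecI, auto)

lemma krylov_vec_pCons_0: "krylov_vec (pCons 0 p) = Z *\<^sub>v krylov_vec p"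
  using krylov_vec_pCons[of 0 p] Z_carrier w_carrier by (intro eq_vecI) auto

lemma krylov_vec_add: "krylov_vec (p + q) = krylov_vec p + krylov_vec q"
proof (induction p q rule: poly_induct2)
  case 0
  show ?case by (intro eq_vecI) auto
next
  case (pCons a p b q)
  show ?case
    using Z_carrier w_carrier
    by (intro eq_vecI) (auto simp: krylov_vec_pCons pCons.IH mult_add_distrib_mat_vec[of _ m m] algebra_simps)
qed

lemma krylov_vec_smult: "krylov_vec (smult c p) = c \<cdot>\<^sub>v krylov_vec p"
proof (induction p)
  case 0
  show ?case by (intro eq_vecI) auto
next
  case (pCons a p)
  show ?case
    using Z_carrier w_carrier
    by (intro eq_vecI) (auto simp: krylov_vec_pCons pCons.IH mult_mat_vec[of _ m m] algebra_simps)
qed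

lemma krylov_vec_sum_index:
  "i < m \<Longrightarrow> krylov_vec (sum f S) $ i = (\<Sum>t\<in>S. krylov_vec (f t) $ i)"
  by (induction S rule: infinite_finite_induct) (simp_all add: krylov_vec_add)

lemma mat_pow_mult_krylov_vec: "(Z ^\<^sub>m t) *\<^sub>v krylov_vec p = krylov_vec ([:0, 1:] ^ t * p)"
proof (induction t arbitrary: p)
  case 0
  show ?case using Z_carrier by simp
next
  case (Suc t)
  have "(Z ^\<^sub>m Suc t) *\<^sub>v krylov_vec p = (Z ^\<^sub>m t) *\<^sub>v krylov_vec (pCons 0 p)"
    using Z_carrier by (simp add: assoc_mult_mat_vec[of _ m m _ m] krylov_vec_pCons_0)
  then show ?case by (simp add: Suc.IH algebra_simps)
qed

lemma mat_of_cols_krylov_vecs_mult: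
  assumes "c \<in> carrier_vec L"
  shows "mat_of_cols m (map (\<lambda>t. krylov_vec (g t)) [0..<L]) *\<^sub>v c = krylov_vec (\<Sum>t<L. smult (c $ t) (g t))"
proof (rule eq_vecI)
  fix i assume "i < dim_vec (krylov_vec (\<Sum>t<L. smult (c $ t) (g t)))"
  then have i: "i < m" by simp
  have "(mat_of_cols m (map (\<lambda>t. krylov_vec (g t)) [0..<L]) *\<^sub>v c) $ i = (\<Sum>t<L. krylov_vec (g t) $ i * c $ t)"
    using assms i by (subst mat_of_cols_mult_vec_index) auto
  also have "\<dots> = krylov_vec (\<Sum>t<L. smult (c $ t) (g t)) $ i"
    using i by (simp add: krylov_vec_sum_index krylov_vec_smult mult.commute)
  finally show "(mat_of_cols m (map (\<lambda>t. krylov_vec (g t)) [0..<L]) *\<^sub>v c) $ i = krylov_vec (\<Sum>t<L. smult (c $ t) (g t)) $ i" .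
qed simp

lemma span_krylov_vecs:
  "span_list m (map (\<lambda>t. krylov_vec (g t)) [0..<L]) = krylov_vec ` {\<Sum>t<L. smult (c t) (g t) | c. True}"
proof (intro equalityI subsetI)
  fix v assume "v \<in> span_list m (map (\<lambda>t. krylov_vec (g t)) [0..<L])"
  then obtain c where "c \<in> carrier_vec L" and "v = mat_of_cols m (map (\<lambda>t. krylov_vec (g t)) [0..<L]) *\<^sub>v c"
    by (auto simp: span_list_def)
  then show "v \<in> krylov_vec ` {\<Sum>t<L. smult (c t) (g t) | c. True}"
    by (auto simp: mat_of_cols_krylov_vecs_mult)
next
  fix v assume "v \<in> krylov_vec ` {\<Sum>t<L. smult (c t) (g t) | c. True}"
  then obtain c where "v = krylov_vec (\<Sum>t<L. smult (c t) (g t))" by auto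
  also have "(\<Sum>t<L. smult (c t) (g t)) = (\<Sum>t<L. smult (vec L c $ t) (g t))" by simp
  finally have "v = mat_of_cols m (map (\<lambda>t. krylov_vec (g t)) [0..<L]) *\<^sub>v vec L c"
    by (simp add: mat_of_cols_krylov_vecs_mult)
  then show "v \<in> span_list m (map (\<lambda>t. krylov_vec (g t)) [0..<L])"
    unfolding span_list_def by fastforce
qed

lemma krylov_eq_image_Pspace: "krylov Z w L = krylov_vec ` Pspace (int L - 1)"
proof -
  have "krylov Z w L = span_list m (map (\<lambda>t. krylov_vec ([:0, 1:] ^ t)) [0..<L])"
    using w_carrier mat_pow_mult_krylov_vec[of _ 1] by (simp add: krylov_def)
  also have "\<dots> = krylov_vec ` Pspace (int L - 1)"
    unfolding span_krylov_vecs Pspace_pred_eq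
    by (subst lincombs_exact_degree_eq_degree_less) (auto simp: degree_linear_power)
  finally show ?thesis .
qed

lemma krylov_vec_diff: "krylov_vec (p - q) = krylov_vec p - krylov_vec q"
proof -
  have "krylov_vec (p - q) = krylov_vec p + (-1) \<cdot>\<^sub>v krylov_vec q"
    using krylov_vec_add[of p "smult (-1) q"] krylov_vec_smult[of "-1" q] by simp
  then show ?thesis by (intro eq_vecI) auto
qed

lemma krylov_vec_eq_imp_eq:
  assumes grade: "\<forall>p. degree p < m \<longrightarrow> krylov_vec p = 0\<^sub>v m \<longrightarrow> p = 0"
    and "krylov_vec p = krylov_vec q" "degree p < m" "degree q < m"
  shows "p = q"
proof -
  have "degree (p - q) < m" using assms(3,4) degree_diff_le_max[of p q] by simp
  moreover have "krylov_vec (p - q) = 0\<^sub>v m"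
    using assms(2) by (intro eq_vecI) (auto simp: krylov_vec_diff)
  ultimately have "p - q = 0" using grade by blast
  then show ?thesis by simp
qed

lemma krylov_vec_recurrence_rhs:
  assumes "H \<in> carrier_mat k k" "c < k"
  shows "krylov_vec (recurrence_rhs p H h k c) =
    mat_of_cols m (map (\<lambda>l. krylov_vec (p l)) [0..<k]) *\<^sub>v col H c +
    (if c = k - 1 then complex_of_real h \<cdot>\<^sub>v krylov_vec (p k) else 0\<^sub>v m)"
proof -
  have "(\<Sum>t<k. smult (H $$ (t, c)) (p t)) = (\<Sum>t<k. smult (col H c $ t) (p t))"
    using assms by simp
  then show ?thesis
    using assms by (simp add: recurrence_rhs_def krylov_vec_add krylov_vec_smult mat_of_cols_krylov_vecs_mult)
qed

lemma arnoldi_rel_iff_krylov_vec_recurrence: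
  assumes H: "H \<in> carrier_mat k k"
  shows "arnoldi_rel Z (mat_of_cols m (map (\<lambda>l. krylov_vec (p l)) [0..<k])) H h (krylov_vec (p k)) k \<longleftrightarrow>
    (\<forall>c<k. krylov_vec (pCons 0 (p c)) = krylov_vec (recurrence_rhs p H h k c))"
proof -
  let ?Q = "mat_of_cols m (map (\<lambda>l. krylov_vec (p l)) [0..<k])"
  have "(Z *\<^sub>v col ?Q c = ?Q *\<^sub>v col H c + (if c = k - 1 then complex_of_real h \<cdot>\<^sub>v krylov_vec (p k) else 0\<^sub>v m))
      \<longleftrightarrow> krylov_vec (pCons 0 (p c)) = krylov_vec (recurrence_rhs p H h k c)" if "c < k" for c
    using that by (simp add: krylov_vec_recurrence_rhs[OF H that] krylov_vec_pCons_0)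
  moreover have "?Q \<in> carrier_mat m k" using mat_of_cols_carrier(1)[of m "map (\<lambda>l. krylov_vec (p l)) [0..<k]"] by simp
  ultimately show ?thesis by (simp add: arnoldi_rel_iff_cols[OF Z_carrier _ H])
qed

lemma sobolev_orthonormal_krylovI:
  assumes deg: "\<forall>l\<le>k. p l \<in> Pspace (int l)"
    and orth: "\<forall>a\<le>k. \<forall>b\<le>k. krylov_vec (p a) \<bullet>c krylov_vec (p b) = (if a = b then 1 else 0)"
  shows "sobolev_orthonormal (\<lambda>p q. krylov_vec p \<bullet>c krylov_vec q) p k"
proof -
  have "p l \<noteq> 0 \<and> degree (p l) = l" if "l \<le> k" for l
    using that
  proof (induction l rule: less_induct)
    case (less l)
    show ?case
    proof (rule ccontr)
      assume "\<not> (p l \<noteq> 0 \<and> degree (p l) = l)"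
      then have "p l \<in> {p. p = 0 \<or> degree p < l}"
        using deg less.prems by (auto simp: Pspace_def)
      also have "\<dots> = {\<Sum>t<l. smult (c t) (p t) | c. True}"
        using less by (intro lincombs_exact_degree_eq_degree_less[symmetric]) auto
      finally obtain c where "p l = (\<Sum>t<l. smult (c t) (p t))" by blast
      also have "\<dots> = (\<Sum>t<l. smult (vec l c $ t) (p t))" by simp
      finally have "krylov_vec (p l) = mat_of_cols m (map (\<lambda>t. krylov_vec (p t)) [0..<l]) *\<^sub>v vec l c"
        by (simp add: mat_of_cols_krylov_vecs_mult)
      then have "krylov_vec (p l) \<bullet>c krylov_vec (p l) =
          (mat_of_cols m (map (\<lambda>t. krylov_vec (p t)) [0..<l]) *\<^sub>v vec l c) \<bullet>c krylov_vec (p l)"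
        by (rule arg_cong)
      also have "\<dots> = (\<Sum>t<l. c t * (krylov_vec (p t) \<bullet>c krylov_vec (p l)))"
        using mat_of_cols_mult_vec_cinner[of "map (\<lambda>t. krylov_vec (p t)) [0..<l]" m "vec l c" "krylov_vec (p l)"]
        by (simp add: image_subset_iff)
      also have "\<dots> = 0" using orth less.prems by simp
      finally show False using orth less.prems by simp
    qed
  qed
  then show ?thesis
    using deg orth unfolding sobolev_orthonormal_def Pspace_diff_iff by blast
qed

lemma sobolev_orthonormal_imp_nested_onb:
  assumes "sobolev_orthonormal (\<lambda>p q. krylov_vec p \<bullet>c krylov_vec q) p k"
  shows "nested_onb (mat_of_cols m (map (\<lambda>l. krylov_vec (p l)) [0..<k])) Z w k"
proof -
  let ?Q = "mat_of_cols m (map (\<lambda>l. krylov_vec (p l)) [0..<k])"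
  have exact: "\<forall>l\<le>k. p l \<noteq> 0 \<and> degree (p l) = l"
    and orth: "\<forall>a\<le>k. \<forall>b\<le>k. krylov_vec (p a) \<bullet>c krylov_vec (p b) = (if a = b then 1 else 0)"
    using assms unfolding sobolev_orthonormal_def Pspace_diff_iff by auto
  have Q: "?Q \<in> carrier_mat m k"
    using mat_of_cols_carrier(1)[of m "map (\<lambda>l. krylov_vec (p l)) [0..<k]"] by simp
  have "mat_adjoint ?Q * ?Q = 1\<^sub>m k"
  proof (rule eq_matI)
    fix a b assume "a < dim_row (1\<^sub>m k :: complex mat)" "b < dim_col (1\<^sub>m k :: complex mat)"
    then show "(mat_adjoint ?Q * ?Q) $$ (a, b) = 1\<^sub>m k $$ (a, b)"
      using orth by (simp add: index_mat_adjoint_mult[OF Q])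
  qed (use Q in \<open>auto simp: mat_adjoint_def\<close>)
  moreover have "span_list (dim_vec w) (map (col ?Q) [0..<i]) = krylov Z w i" if "i \<in> {1..k}" for i
  proof -
    have cols: "map (col ?Q) [0..<i] = map (\<lambda>l. krylov_vec (p l)) [0..<i]"
      using that by simp
    have "{\<Sum>t<i. smult (c t) (p t) | c. True} = {p. p = 0 \<or> degree p < i}"
      using that exact by (intro lincombs_exact_degree_eq_degree_less) auto
    then show ?thesis
      unfolding cols using w_carrier by (simp add: span_krylov_vecs krylov_eq_image_Pspace Pspace_pred_eq)
  qed
  ultimately show ?thesis
    using Q w_carrier by (simp add: nested_onb_def)
qed

lemma nested_onb_krylov_polys:
  assumes "nested_onb Q Z w k"
  obtains P where "\<forall>l<k. P l \<in> Pspace (int l) \<and> krylov_vec (P l) = col Q l"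
proof -
  have Q: "Q \<in> carrier_mat m k" and span: "\<And>i. i \<in> {1..k} \<Longrightarrow> span_list m (map (col Q) [0..<i]) = krylov Z w i"
    using assms w_carrier by (auto simp: nested_onb_def)
  have "\<exists>p. p \<in> Pspace (int l) \<and> krylov_vec p = col Q l" if "l < k" for l
  proof -
    have "set (map (col Q) [0..<Suc l]) \<subseteq> carrier_vec m" using Q by auto
    then have "map (col Q) [0..<Suc l] ! l \<in> span_list m (map (col Q) [0..<Suc l])"
      by (rule nth_mem_span_list) simp
    then have "col Q l \<in> span_list m (map (col Q) [0..<Suc l])"
      by (simp del: upt_Suc)
    also have "\<dots> = krylov_vec ` Pspace (int l)"
      using span[of "Suc l"] that by (simp add: krylov_eq_image_Pspace)
    finally show ?thesis by auto
  qed
  then show ?thesis using that by metis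
qed

lemma arnoldi_krylov_polys_exist:
  assumes onb: "nested_onb Q Z w k" and H: "H \<in> carrier_mat k k" and h: "h \<noteq> 0"
    and q: "q \<in> carrier_vec m" and rel: "arnoldi_rel Z Q H h q k" and k: "1 \<le> k"
  shows "\<exists>p. \<forall>l\<le>k. p l \<in> Pspace (int l) \<and> krylov_vec (p l) = (if l < k then col Q l else q)"
proof -
  obtain P where P: "\<forall>l<k. P l \<in> Pspace (int l) \<and> krylov_vec (P l) = col Q l"
    using nested_onb_krylov_polys[OF onb] by blast
  have Q: "Q \<in> carrier_mat m k"
    using onb w_carrier by (simp add: nested_onb_def)
  have Q_eq: "Q = mat_of_cols m (map (\<lambda>l. krylov_vec (P l)) [0..<k])"
    using Q P by (intro mat_eq_mat_of_cols) auto
  define p_k where "p_k = smult (1 / complex_of_real h) (pCons 0 (P (k - 1)) - (\<Sum>t<k. smult (H $$ (t, k - 1)) (P t)))"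
  have "krylov_vec p_k = q"
  proof (rule eq_vecI)
    fix i assume "i < dim_vec q"
    then have i: "i < m" using q by simp
    have "Z *\<^sub>v col Q (k - 1) = Q *\<^sub>v col H (k - 1) + complex_of_real h \<cdot>\<^sub>v q"
      using rel k by (simp add: arnoldi_rel_iff_cols[OF Z_carrier Q H q])
    moreover have "Q *\<^sub>v col H (k - 1) = krylov_vec (\<Sum>t<k. smult (H $$ (t, k - 1)) (P t))"
      using H k unfolding Q_eq by (subst mat_of_cols_krylov_vecs_mult) auto
    ultimately have "krylov_vec (pCons 0 (P (k - 1))) $ i = krylov_vec (\<Sum>t<k. smult (H $$ (t, k - 1)) (P t)) $ i + h * q $ i"
      using P k i q by (simp add: krylov_vec_pCons_0)
    then show "krylov_vec p_k $ i = q $ i"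
      using i h by (simp add: p_k_def krylov_vec_smult krylov_vec_diff)
  qed (use q in simp)
  moreover have "degree p_k \<le> k"
  proof -
    have deg_P: "degree (P t) \<le> t" if "t < k" for t
      using P that by (auto simp: Pspace_def)
    have "degree (P (k - 1)) \<le> k - 1" using deg_P k by simp
    then have "degree (pCons 0 (P (k - 1))) \<le> k"
      using k degree_pCons_le[of 0 "P (k - 1)"] by linarith
    moreover have "degree (\<Sum>t<k. smult (H $$ (t, k - 1)) (P t)) \<le> k"
      using deg_P by (intro degree_sum_le) (auto intro: order.trans[OF degree_smult_le] order.trans[OF deg_P])
    ultimately have "degree (pCons 0 (P (k - 1)) - (\<Sum>t<k. smult (H $$ (t, k - 1)) (P t))) \<le> k"
      by (rule degree_diff_le)
    then show ?thesis unfolding p_k_def by (rule order.trans[OF degree_smult_le])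
  qed
  ultimately have "\<forall>l\<le>k. (P(k := p_k)) l \<in> Pspace (int l) \<and> krylov_vec ((P(k := p_k)) l) = (if l < k then col Q l else q)"
    using P by (auto simp: Pspace_def)
  then show ?thesis by blast
qed

lemma arnoldi_krylov_polys_orthonormal:
  assumes onb: "nested_onb Q Z w k" and H: "H \<in> carrier_mat k k"
    and q: "q \<in> carrier_vec m" "q \<bullet>c q = 1" "mat_adjoint (mat_of_cols m [q]) * Q = 0\<^sub>m 1 k"
    and rel: "arnoldi_rel Z Q H h q k"
    and grade: "\<forall>p. degree p < m \<longrightarrow> krylov_vec p = 0\<^sub>v m \<longrightarrow> p = 0" and "k < m"
    and p: "\<forall>l\<le>k. p l \<in> Pspace (int l) \<and> krylov_vec (p l) = (if l < k then col Q l else q)"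
  shows "sobolev_orthonormal (\<lambda>p q. krylov_vec p \<bullet>c krylov_vec q) p k \<and> poly_recurrence p H h k"
proof
  have Q: "Q \<in> carrier_mat m k" "mat_adjoint Q * Q = 1\<^sub>m k"
    using onb w_carrier by (auto simp: nested_onb_def)
  show "sobolev_orthonormal (\<lambda>p q. krylov_vec p \<bullet>c krylov_vec q) p k"
    using p arnoldi_vecs_orthonormal[OF Q q] by (intro sobolev_orthonormal_krylovI) auto
  have "Q = mat_of_cols m (map (\<lambda>l. krylov_vec (p l)) [0..<k])"
    using Q p by (intro mat_eq_mat_of_cols) auto
  moreover have "q = krylov_vec (p k)" using p by simp
  ultimately have "\<forall>c<k. krylov_vec (pCons 0 (p c)) = krylov_vec (recurrence_rhs p H h k c)"
    using rel by (simp add: arnoldi_rel_iff_krylov_vec_recurrence[OF H])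
  moreover have "degree (pCons 0 (p c)) < m" "degree (recurrence_rhs p H h k c) < m" if "c < k" for c
  proof -
    have "p c \<in> Pspace (int c)" using p that by simp
    then have "degree (p c) \<le> c" by (auto simp: Pspace_def)
    then show "degree (pCons 0 (p c)) < m"
      using degree_pCons_le[of 0 "p c"] that \<open>k < m\<close> by linarith
    show "degree (recurrence_rhs p H h k c) < m"
      using degree_recurrence_rhs_le[of k p H h c] p \<open>k < m\<close> by simp
  qed
  ultimately show "poly_recurrence p H h k"
    unfolding poly_recurrence_iff using krylov_vec_eq_imp_eq[OF grade] by blast
qed

lemma sobolev_orthonormal_imp_arnoldi:
  assumes so: "sobolev_orthonormal (\<lambda>p q. krylov_vec p \<bullet>c krylov_vec q) p k"
    and H: "H \<in> carrier_mat k k" and rec: "poly_recurrence p H h k"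
  shows "nested_onb (mat_of_cols m (map (\<lambda>l. krylov_vec (p l)) [0..<k])) Z w k \<and>
    arnoldi_rel Z (mat_of_cols m (map (\<lambda>l. krylov_vec (p l)) [0..<k])) H h (krylov_vec (p k)) k"
  using sobolev_orthonormal_imp_nested_onb[OF so] rec
  by (simp add: arnoldi_rel_iff_krylov_vec_recurrence[OF H] poly_recurrence_iff)

theorem arnoldi_iff_sobolev_orthonormal:
  assumes grade: "\<forall>p. degree p < m \<longrightarrow> krylov_vec p = 0\<^sub>v m \<longrightarrow> p = 0" and k: "1 \<le> k" "k < m"
  shows
   "(\<forall>Q H h q.
      nested_onb Q Z w k \<and> H \<in> carrier_mat k k \<and> h \<noteq> 0 \<and> q \<in> carrier_vec m \<and> q \<bullet>c q = 1 \<and>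
      mat_adjoint (mat_of_cols m [q]) * Q = 0\<^sub>m 1 k \<and> arnoldi_rel Z Q H h q k
      \<longrightarrow>
      (\<exists>p. \<forall>l\<le>k. p l \<in> Pspace (int l) \<and> krylov_vec (p l) = (if l < k then col Q l else q)) \<and>
      (\<forall>p. (\<forall>l\<le>k. p l \<in> Pspace (int l) \<and> krylov_vec (p l) = (if l < k then col Q l else q))
         \<longrightarrow> sobolev_orthonormal (\<lambda>p q. krylov_vec p \<bullet>c krylov_vec q) p k \<and> poly_recurrence p H h k))
    \<and>
    (\<forall>p H h.
      sobolev_orthonormal (\<lambda>p q. krylov_vec p \<bullet>c krylov_vec q) p k \<and> H \<in> carrier_mat k k \<and>
      poly_recurrence p H h k
      \<longrightarrow>
      nested_onb (mat_of_cols m (map (\<lambda>l. krylov_vec (p l)) [0..<k])) Z w k \<and>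
      arnoldi_rel Z (mat_of_cols m (map (\<lambda>l. krylov_vec (p l)) [0..<k])) H h (krylov_vec (p k)) k)"
proof (intro conjI allI impI; elim conjE)
  fix Q H h q
  assume onb: "nested_onb Q Z w k" and H: "H \<in> carrier_mat k k" and "h \<noteq> 0"
    and q: "q \<in> carrier_vec m" "q \<bullet>c q = 1" "mat_adjoint (mat_of_cols m [q]) * Q = 0\<^sub>m 1 k"
    and rel: "arnoldi_rel Z Q H h q k"
  show "\<exists>p. \<forall>l\<le>k. p l \<in> Pspace (int l) \<and> krylov_vec (p l) = (if l < k then col Q l else q)"
    by (rule arnoldi_krylov_polys_exist[OF onb H \<open>h \<noteq> 0\<close> q(1) rel k(1)])
  show "sobolev_orthonormal (\<lambda>p q. krylov_vec p \<bullet>c krylov_vec q) p k" and "poly_recurrence p H h k"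
    if "\<forall>l\<le>k. p l \<in> Pspace (int l) \<and> krylov_vec (p l) = (if l < k then col Q l else q)" for p
    using arnoldi_krylov_polys_orthonormal[OF onb H q rel grade k(2) that] by simp_all
next
  fix p H h
  assume "sobolev_orthonormal (\<lambda>p q. krylov_vec p \<bullet>c krylov_vec q) p k" "H \<in> carrier_mat k k"
    "poly_recurrence p H h k"
  then show "nested_onb (mat_of_cols m (map (\<lambda>l. krylov_vec (p l)) [0..<k])) Z w k"
    and "arnoldi_rel Z (mat_of_cols m (map (\<lambda>l. krylov_vec (p l)) [0..<k])) H h (krylov_vec (p k)) k"
    using sobolev_orthonormal_imp_arnoldi by simp_all
qed

end

section \<open>The bidiagonal Sobolev model\<close>

definition sob_scale :: "(nat \<Rightarrow> nat \<Rightarrow> complex) \<Rightarrow> nat \<Rightarrow> nat \<Rightarrow> complex" where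
  "sob_scale \<alpha> j r = (\<Prod>i=1..r. \<alpha> j i) / of_nat (fact r)"

definition sob_block_vec :: "(nat \<Rightarrow> complex) \<Rightarrow> (nat \<Rightarrow> nat) \<Rightarrow> (nat \<Rightarrow> complex) \<Rightarrow> (nat \<Rightarrow> nat \<Rightarrow> complex)
    \<Rightarrow> nat \<Rightarrow> complex poly \<Rightarrow> complex vec" where
  "sob_block_vec z kk \<beta> \<alpha> j p =
     vec (kk j + 1) (\<lambda>s. \<beta> j * sob_scale \<alpha> j (kk j - s) * poly ((pderiv ^^ (kk j - s)) p) (z j))"

primrec sob_vec :: "(nat \<Rightarrow> complex) \<Rightarrow> (nat \<Rightarrow> nat) \<Rightarrow> (nat \<Rightarrow> complex) \<Rightarrow> (nat \<Rightarrow> nat \<Rightarrow> complex)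
    \<Rightarrow> nat list \<Rightarrow> complex poly \<Rightarrow> complex vec" where
  "sob_vec z kk \<beta> \<alpha> [] p = vec 0 (\<lambda>_. 0)"
| "sob_vec z kk \<beta> \<alpha> (j # js) p = sob_block_vec z kk \<beta> \<alpha> j p @\<^sub>v sob_vec z kk \<beta> \<alpha> js p"

definition blocks_dim :: "(nat \<Rightarrow> nat) \<Rightarrow> nat list \<Rightarrow> nat" where
  "blocks_dim kk js = (\<Sum>j\<leftarrow>js. kk j + 1)"

lemma blocks_dim_simps [simp]:
  "blocks_dim kk [] = 0"
  "blocks_dim kk (j # js) = kk j + 1 + blocks_dim kk js"
  by (simp_all add: blocks_dim_def)

lemma sob_m_eq_blocks_dim: "sob_m n kk = blocks_dim kk [1..<n+1]"
  unfolding sob_m_def blocks_dim_def sum_set_upt_conv_sum_list_nat[symmetric]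
  by (rule sum.cong) auto

lemma dim_sob_block_vec [simp]: "dim_vec (sob_block_vec z kk \<beta> \<alpha> j p) = Suc (kk j)"
  by (simp add: sob_block_vec_def)

lemma sob_block_vec_carrier [simp]: "sob_block_vec z kk \<beta> \<alpha> j p \<in> carrier_vec (Suc (kk j))"
  by (simp add: sob_block_vec_def)

lemma dim_sob_vec [simp]: "dim_vec (sob_vec z kk \<beta> \<alpha> js p) = blocks_dim kk js"
  by (induction js) auto

lemma sob_vec_carrier [simp]: "sob_vec z kk \<beta> \<alpha> js p \<in> carrier_vec (blocks_dim kk js)"
  by (rule carrier_vecI) simp

lemma sob_scale_Suc: "sob_scale \<alpha> j (Suc r) * of_nat (Suc r) = \<alpha> j (Suc r) * sob_scale \<alpha> j r"
proof -
  have "sob_scale \<alpha> j (Suc r) = ((\<Prod>i=1..r. \<alpha> j i) * \<alpha> j (Suc r)) / (of_nat (Suc r) * fact r)"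
    unfolding sob_scale_def of_nat_fact by (simp add: prod.cl_ivl_Suc del: of_nat_Suc)
  moreover have "(fact r :: complex) + fact r * of_nat r = fact r * of_nat (Suc r)"
    by (simp add: algebra_simps)
  moreover have "(fact r :: complex) \<noteq> 0" "(of_nat (Suc r) :: complex) \<noteq> 0"
    by (simp_all del: of_nat_Suc)
  ultimately show ?thesis unfolding sob_scale_def by (simp add: field_simps del: of_nat_Suc)
qed

lemma sob_J_carrier [simp]: "sob_J z kk \<alpha> j \<in> carrier_mat (Suc (kk j)) (Suc (kk j))"
  by (simp add: sob_J_def)

lemma index_sob_J_mult_vec:
  assumes "v \<in> carrier_vec (Suc (kk j))" "s \<le> kk j"
  shows "(sob_J z kk \<alpha> j *\<^sub>v v) $ s = z j * v $ s + (if s < kk j then \<alpha> j (kk j - s) * v $ (s + 1) else 0)"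
proof -
  have "(sob_J z kk \<alpha> j *\<^sub>v v) $ s
      = (\<Sum>t\<in>{0..<kk j + 1}. (if s = t then z j else if t = s + 1 then \<alpha> j (kk j - s) else 0) * v $ t)"
    using assms by (simp add: sob_J_def scalar_prod_def)
  also have "\<dots> = (\<Sum>t\<in>{0..<kk j + 1}. (if t = s then z j * v $ s else 0) + (if t = s + 1 then \<alpha> j (kk j - s) * v $ (s + 1) else 0))"
    by (rule sum.cong) auto
  also have "\<dots> = z j * v $ s + (if s < kk j then \<alpha> j (kk j - s) * v $ (s + 1) else 0)"
    using assms(2) by (simp add: sum.distrib)
  finally show ?thesis .
qed

lemma sob_J_mult_block_vec:
  "sob_J z kk \<alpha> j *\<^sub>v sob_block_vec z kk \<beta> \<alpha> j p = sob_block_vec z kk \<beta> \<alpha> j (pCons 0 p)"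
proof (rule eq_vecI)
  fix s assume "s < dim_vec (sob_block_vec z kk \<beta> \<alpha> j (pCons 0 p))"
  then have s: "s \<le> kk j" by (simp add: sob_block_vec_def)
  let ?v = "\<lambda>t. sob_block_vec z kk \<beta> \<alpha> j p $ t"
  have "(sob_J z kk \<alpha> j *\<^sub>v sob_block_vec z kk \<beta> \<alpha> j p) $ s
      = z j * ?v s + (if s < kk j then \<alpha> j (kk j - s) * ?v (s + 1) else 0)"
    using s by (simp add: index_sob_J_mult_vec)
  also have "\<dots> = sob_block_vec z kk \<beta> \<alpha> j (pCons 0 p) $ s"
  proof (cases "s < kk j")
    case True
    then obtain r where r: "kk j - s = Suc r" "kk j - (s + 1) = r"
      by (metis Suc_diff_Suc add.commute plus_1_eq_Suc diff_Suc_eq_diff_pred diff_Suc_1)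
    have "z j * ?v s + \<alpha> j (Suc r) * ?v (s + 1) =
        \<beta> j * (sob_scale \<alpha> j (Suc r) * (z j * poly ((pderiv ^^ Suc r) p) (z j))
          + \<alpha> j (Suc r) * sob_scale \<alpha> j r * poly ((pderiv ^^ r) p) (z j))"
      using s r by (simp add: sob_block_vec_def algebra_simps)
    also have "\<dots> = \<beta> j * sob_scale \<alpha> j (Suc r) *
        (z j * poly ((pderiv ^^ Suc r) p) (z j) + of_nat (Suc r) * poly ((pderiv ^^ r) p) (z j))"
      unfolding sob_scale_Suc[symmetric] by (simp add: algebra_simps)
    also have "\<dots> = sob_block_vec z kk \<beta> \<alpha> j (pCons 0 p) $ s"
      using s r poly_higher_pderiv_pCons_0[of r p "z j"] by (simp add: sob_block_vec_def del: of_nat_Suc)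
    finally show ?thesis using True r by simp
  next
    case False
    then show ?thesis using s by (simp add: sob_block_vec_def)
  qed
  finally show "(sob_J z kk \<alpha> j *\<^sub>v sob_block_vec z kk \<beta> \<alpha> j p) $ s = sob_block_vec z kk \<beta> \<alpha> j (pCons 0 p) $ s" .
qed (simp add: sob_J_def sob_block_vec_def)

lemma diag_block_sob_J_carrier:
  "diag_block_mat (map (sob_J z kk \<alpha>) js) \<in> carrier_mat (blocks_dim kk js) (blocks_dim kk js)"
  by (induction js) (auto simp: Let_def sob_J_def)

lemma diag_block_sob_J_mult_sob_vec:
  "diag_block_mat (map (sob_J z kk \<alpha>) js) *\<^sub>v sob_vec z kk \<beta> \<alpha> js p = sob_vec z kk \<beta> \<alpha> js (pCons 0 p)"
proof (induction js)
  case Nil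
  then show ?case by auto
next
  case (Cons j js)
  have "diag_block_mat (map (sob_J z kk \<alpha>) (j # js)) =
      four_block_mat (sob_J z kk \<alpha> j) (0\<^sub>m (kk j + 1) (blocks_dim kk js))
        (0\<^sub>m (blocks_dim kk js) (kk j + 1)) (diag_block_mat (map (sob_J z kk \<alpha>) js))"
    using diag_block_sob_J_carrier[of z kk \<alpha> js] by (simp add: Let_def sob_J_def)
  then show ?case
    by (simp only: sob_vec.simps, subst mult_mat_vec_split[of _ "kk j + 1" _ "blocks_dim kk js"])
      (use diag_block_sob_J_carrier[of z kk \<alpha> js] in \<open>auto simp: sob_J_mult_block_vec Cons.IH\<close>)
qed

lemma sob_vec_add: "sob_vec z kk \<beta> \<alpha> js (p + q) = sob_vec z kk \<beta> \<alpha> js p + sob_vec z kk \<beta> \<alpha> js q"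
proof (induction js)
  case (Cons j js)
  have "sob_block_vec z kk \<beta> \<alpha> j (p + q) = sob_block_vec z kk \<beta> \<alpha> j p + sob_block_vec z kk \<beta> \<alpha> j q"
    by (intro eq_vecI) (auto simp: sob_block_vec_def higher_pderiv_add algebra_simps)
  then show ?case
    by (simp only: sob_vec.simps Cons.IH, subst append_vec_add[of _ "kk j + 1" _ _ "blocks_dim kk js"]) auto
qed auto

lemma sob_vec_smult: "sob_vec z kk \<beta> \<alpha> js (smult c p) = c \<cdot>\<^sub>v sob_vec z kk \<beta> \<alpha> js p"
proof (induction js)
  case (Cons j js)
  have "sob_block_vec z kk \<beta> \<alpha> j (smult c p) = c \<cdot>\<^sub>v sob_block_vec z kk \<beta> \<alpha> j p"
    by (intro eq_vecI) (auto simp: sob_block_vec_def higher_pderiv_smult algebra_simps)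
  then show ?case
    using Cons.IH by (intro eq_vecI) auto
qed auto

lemma sob_vec_1:
  "sob_vec z kk \<beta> \<alpha> js 1 = vec_of_list (concat (map (\<lambda>j. replicate (kk j) 0 @ [\<beta> j]) js))"
proof (induction js)
  case Nil
  then show ?case by (auto simp: vec_of_list_Nil)
next
  case (Cons j js)
  have "sob_block_vec z kk \<beta> \<alpha> j 1 = vec_of_list (replicate (kk j) 0 @ [\<beta> j])"
  proof (rule eq_vecI)
    fix s assume "s < dim_vec (vec_of_list (replicate (kk j) 0 @ [\<beta> j]))"
    then have s: "s \<le> kk j" by simp
    show "sob_block_vec z kk \<beta> \<alpha> j 1 $ s = vec_of_list (replicate (kk j) 0 @ [\<beta> j]) $ s"
    proof (cases "s < kk j")
      case True
      then obtain r where "kk j - s = Suc r" by (metis Suc_diff_Suc)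
      with True s show ?thesis
        by (simp add: sob_block_vec_def vec_of_list_index nth_append del: funpow.simps)
    next
      case False
      with s show ?thesis by (simp add: sob_block_vec_def vec_of_list_index nth_append sob_scale_def)
    qed
  qed simp
  moreover have "vec_of_list (concat (map (\<lambda>j. replicate (kk j) 0 @ [\<beta> j]) (j # js))) =
      vec_of_list (replicate (kk j) 0 @ [\<beta> j]) @\<^sub>v vec_of_list (concat (map (\<lambda>j. replicate (kk j) 0 @ [\<beta> j]) js))"
    by (simp only: list.map concat.simps vec_of_list_append[of "replicate (kk j) 0 @ [\<beta> j]"])
  ultimately show ?case
    using Cons.IH by simp
qed

lemma sob_block_vec_cinner:
  "sob_block_vec z kk \<beta> \<alpha> j p \<bullet>c sob_block_vec z kk \<beta> \<alpha> j q =
    complex_of_real ((cmod (\<beta> j))\<^sup>2) *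
      (\<Sum>r=0..kk j. complex_of_real ((cmod (sob_scale \<alpha> j r))\<^sup>2) *
         cnj (poly ((pderiv ^^ r) q) (z j)) * poly ((pderiv ^^ r) p) (z j))"
proof -
  let ?g = "\<lambda>r. \<beta> j * sob_scale \<alpha> j r * poly ((pderiv ^^ r) p) (z j) *
    cnj (\<beta> j * sob_scale \<alpha> j r * poly ((pderiv ^^ r) q) (z j))"
  have "sob_block_vec z kk \<beta> \<alpha> j p \<bullet>c sob_block_vec z kk \<beta> \<alpha> j q = (\<Sum>s=0..kk j. ?g (kk j - s))"
    unfolding scalar_prod_def by (rule sum.cong) (auto simp: sob_block_vec_def)
  also have "\<dots> = (\<Sum>s=0..kk j. ?g s)"
    by (subst sum.atLeastAtMost_rev) simp
  also have "\<dots> = complex_of_real ((cmod (\<beta> j))\<^sup>2) *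
      (\<Sum>r=0..kk j. complex_of_real ((cmod (sob_scale \<alpha> j r))\<^sup>2) *
         cnj (poly ((pderiv ^^ r) q) (z j)) * poly ((pderiv ^^ r) p) (z j))"
    unfolding sum_distrib_left complex_norm_square by (rule sum.cong) (auto simp: algebra_simps)
  finally show ?thesis .
qed

lemma sob_vec_cinner:
  "sob_vec z kk \<beta> \<alpha> js p \<bullet>c sob_vec z kk \<beta> \<alpha> js q =
    (\<Sum>j\<leftarrow>js. sob_block_vec z kk \<beta> \<alpha> j p \<bullet>c sob_block_vec z kk \<beta> \<alpha> j q)"
proof (induction js)
  case Nil
  then show ?case by (simp add: scalar_prod_def)
next
  case (Cons j js)
  show ?case
    unfolding sob_vec.simps conjugate_append_vec
    by (subst scalar_prod_append[of _ "Suc (kk j)" _ "blocks_dim kk js"]) (auto simp: Cons.IH)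
qed

lemma sob_ip_eq_sob_vec_cinner:
  "sob_ip n z kk \<beta> \<alpha> p q = sob_vec z kk \<beta> \<alpha> [1..<n+1] p \<bullet>c sob_vec z kk \<beta> \<alpha> [1..<n+1] q"
  unfolding sob_vec_cinner sob_block_vec_cinner sob_ip_def sob_scale_def
    sum_set_upt_conv_sum_list_nat[symmetric]
  by (rule sum.cong) auto

lemma sob_vec_0: "sob_vec z kk \<beta> \<alpha> js 0 = 0\<^sub>v (blocks_dim kk js)"
proof (rule eq_vecI)
  fix i assume i: "i < dim_vec (0\<^sub>v (blocks_dim kk js) :: complex vec)"
  have "sob_vec z kk \<beta> \<alpha> js 0 $ i = (0 \<cdot>\<^sub>v sob_vec z kk \<beta> \<alpha> js 0) $ i"
    using sob_vec_smult[of z kk \<beta> \<alpha> js 0 0] by simp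
  then show "sob_vec z kk \<beta> \<alpha> js 0 $ i = 0\<^sub>v (blocks_dim kk js) $ i" using i by simp
qed simp

lemma sob_vec_zero_imp_block_zero:
  assumes "\<forall>i < blocks_dim kk js. sob_vec z kk \<beta> \<alpha> js p $ i = 0" "j \<in> set js" "s \<le> kk j"
  shows "sob_block_vec z kk \<beta> \<alpha> j p $ s = 0"
  using assms
proof (induction js)
  case (Cons j' js)
  have "\<forall>i < Suc (kk j'). sob_block_vec z kk \<beta> \<alpha> j' p $ i = 0"
  proof (intro allI impI)
    fix i assume "i < Suc (kk j')"
    then show "sob_block_vec z kk \<beta> \<alpha> j' p $ i = 0" using Cons.prems(1)[rule_format, of i] by simp
  qed
  moreover have "\<forall>i < blocks_dim kk js. sob_vec z kk \<beta> \<alpha> js p $ i = 0"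
  proof (intro allI impI)
    fix i assume "i < blocks_dim kk js"
    then show "sob_vec z kk \<beta> \<alpha> js p $ i = 0" using Cons.prems(1)[rule_format, of "Suc (kk j') + i"] by simp
  qed
  ultimately show ?case
    using Cons by (cases "j = j'") auto
qed simp

lemma sob_Z_carrier: "sob_Z n z kk \<alpha> \<in> carrier_mat (sob_m n kk) (sob_m n kk)"
  unfolding sob_Z_def sob_m_eq_blocks_dim by (rule diag_block_sob_J_carrier)

lemma sob_w_eq_sob_vec: "sob_w n kk \<beta> = sob_vec z kk \<beta> \<alpha> [1..<n+1] 1"
  unfolding sob_w_def by (rule sob_vec_1[symmetric])

lemma sob_krylov_setup: "krylov_setup (sob_Z n z kk \<alpha>) (sob_w n kk \<beta>) (sob_m n kk)"
proof
  show "sob_Z n z kk \<alpha> \<in> carrier_mat (sob_m n kk) (sob_m n kk)" by (rule sob_Z_carrier)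
  show "sob_w n kk \<beta> \<in> carrier_vec (sob_m n kk)"
    unfolding sob_w_eq_sob_vec[of _ _ _ z \<alpha>] sob_m_eq_blocks_dim by (rule sob_vec_carrier)
qed

lemma poly_mat_sob_Z_mult_sob_w:
  "poly_mat p (sob_Z n z kk \<alpha>) *\<^sub>v sob_w n kk \<beta> = sob_vec z kk \<beta> \<alpha> [1..<n+1] p"
proof -
  interpret krylov_setup "sob_Z n z kk \<alpha>" "sob_w n kk \<beta>" "sob_m n kk"
    by (rule sob_krylov_setup)
  have "krylov_vec p = sob_vec z kk \<beta> \<alpha> [1..<n+1] p"
  proof (induction p)
    case 0
    show ?case by (simp add: sob_vec_0 sob_m_eq_blocks_dim)
  next
    case (pCons a p)
    have Z_mult: "sob_Z n z kk \<alpha> *\<^sub>v sob_vec z kk \<beta> \<alpha> [1..<n+1] p = sob_vec z kk \<beta> \<alpha> [1..<n+1] (pCons 0 p)"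
      unfolding sob_Z_def by (rule diag_block_sob_J_mult_sob_vec)
    have "krylov_vec (pCons a p) = a \<cdot>\<^sub>v sob_w n kk \<beta> + sob_vec z kk \<beta> \<alpha> [1..<n+1] (pCons 0 p)"
      by (simp only: krylov_vec_pCons pCons.IH Z_mult)
    also have "\<dots> = a \<cdot>\<^sub>v sob_vec z kk \<beta> \<alpha> [1..<n+1] 1 + sob_vec z kk \<beta> \<alpha> [1..<n+1] (pCons 0 p)"
      by (simp only: sob_w_eq_sob_vec[of _ _ _ z \<alpha>])
    also have "\<dots> = sob_vec z kk \<beta> \<alpha> [1..<n+1] (smult a 1 + pCons 0 p)"
      by (simp only: sob_vec_add sob_vec_smult)
    also have "smult a 1 + pCons 0 p = pCons a p" by simp
    finally show ?case .
  qed
  then show ?thesis by (simp add: krylov_vec_def)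
qed

lemma sob_full_grade:
  assumes z: "inj_on z {1..n}" and \<beta>: "\<forall>j\<in>{1..n}. \<beta> j \<noteq> 0"
    and \<alpha>: "\<forall>j\<in>{1..n}. \<forall>i\<in>{1..kk j}. \<alpha> j i \<noteq> 0"
    and zero: "poly_mat p (sob_Z n z kk \<alpha>) *\<^sub>v sob_w n kk \<beta> = 0\<^sub>v (sob_m n kk)"
    and deg: "degree p < sob_m n kk"
  shows "p = 0"
proof (rule ccontr)
  assume "p \<noteq> 0"
  have "poly ((pderiv ^^ r) p) (z j) = 0" if j: "j \<in> {1..n}" and r: "r \<le> kk j" for j r
  proof -
    have "sob_block_vec z kk \<beta> \<alpha> j p $ (kk j - r) = 0"
      using zero j by (intro sob_vec_zero_imp_block_zero[of kk "[1..<n+1]"])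
        (auto simp: poly_mat_sob_Z_mult_sob_w sob_m_eq_blocks_dim)
    moreover have "\<beta> j * sob_scale \<alpha> j r \<noteq> 0"
      using \<beta> \<alpha> j r by (auto simp: sob_scale_def)
    ultimately show ?thesis using r by (simp add: sob_block_vec_def)
  qed
  then have order: "kk j < order (z j) p" if "j \<in> {1..n}" for j
    using that \<open>p \<noteq> 0\<close> by (intro order_gt_if_higher_pderivs_vanish) auto
  have "sob_m n kk \<le> (\<Sum>j=1..n. order (z j) p)"
    unfolding sob_m_def using order by (intro sum_mono) (simp add: Suc_leI)
  also have "\<dots> = (\<Sum>x\<in>z ` {1..n}. order x p)"
    using z by (simp add: sum.reindex)
  also have "\<dots> \<le> (\<Sum>x | poly p x = 0. order x p)"
  proof (intro sum_mono2 poly_roots_finite subsetI)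
    fix x assume "x \<in> z ` {1..n}"
    then obtain j where "j \<in> {1..n}" "x = z j" by blast
    with order[of j] show "x \<in> {x. poly p x = 0}" by (simp add: order_root)
  qed (use \<open>p \<noteq> 0\<close> in auto)
  also have "\<dots> \<le> degree p"
    by (rule sum_order_le_degree[OF \<open>p \<noteq> 0\<close>])
  finally show False using deg by simp
qed

lemma sob_ip_eq_cinner:
  "sob_ip n z kk \<beta> \<alpha> p q =
    (poly_mat p (sob_Z n z kk \<alpha>) *\<^sub>v sob_w n kk \<beta>) \<bullet>c (poly_mat q (sob_Z n z kk \<alpha>) *\<^sub>v sob_w n kk \<beta>)"
  by (simp add: poly_mat_sob_Z_mult_sob_w sob_ip_eq_sob_vec_cinner)

theorem corollary1:
  fixes n k :: nat and z \<beta> :: "nat \<Rightarrow> complex" and kk :: "nat \<Rightarrow> nat"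
    and \<alpha> :: "nat \<Rightarrow> nat \<Rightarrow> complex"
  assumes "n \<ge> 1"
    and "inj_on z {1..n}"
    and "\<forall>j\<in>{1..n}. \<beta> j \<noteq> 0"
    and "\<forall>j\<in>{1..n}. \<forall>i\<in>{1..kk j}. \<alpha> j i \<noteq> 0"
    and "1 \<le> k" and "k < sob_m n kk"
  shows
   "(\<forall>Q H h q.
      nested_onb Q (sob_Z n z kk \<alpha>) (sob_w n kk \<beta>) k \<and>
      H \<in> carrier_mat k k \<and> hessenberg H \<and> h > 0 \<and>
      q \<in> carrier_vec (sob_m n kk) \<and> q \<bullet>c q = 1 \<and>
      mat_adjoint (mat_of_cols (sob_m n kk) [q]) * Q = 0\<^sub>m 1 k \<and>
      arnoldi_rel (sob_Z n z kk \<alpha>) Q H h q k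
      \<longrightarrow>
      (\<exists>p. \<forall>l\<le>k. p l \<in> Pspace (int l) \<and>
             poly_mat (p l) (sob_Z n z kk \<alpha>) *\<^sub>v sob_w n kk \<beta> = (if l < k then col Q l else q)) \<and>
      (\<forall>p. (\<forall>l\<le>k. p l \<in> Pspace (int l) \<and>
             poly_mat (p l) (sob_Z n z kk \<alpha>) *\<^sub>v sob_w n kk \<beta> = (if l < k then col Q l else q))
         \<longrightarrow> sobolev_orthonormal (sob_ip n z kk \<beta> \<alpha>) p k \<and> poly_recurrence p H h k))
    \<and>
    (\<forall>p H h.
      sobolev_orthonormal (sob_ip n z kk \<beta> \<alpha>) p k \<and>
      H \<in> carrier_mat k k \<and> hessenberg H \<and> h > 0 \<and> poly_recurrence p H h k
      \<longrightarrow>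
      (let Q = mat_of_cols (sob_m n kk) (map (\<lambda>l. poly_mat (p l) (sob_Z n z kk \<alpha>) *\<^sub>v sob_w n kk \<beta>) [0..<k]);
           q = poly_mat (p k) (sob_Z n z kk \<alpha>) *\<^sub>v sob_w n kk \<beta>
       in nested_onb Q (sob_Z n z kk \<alpha>) (sob_w n kk \<beta>) k \<and> arnoldi_rel (sob_Z n z kk \<alpha>) Q H h q k))"
proof -
  interpret krylov_setup "sob_Z n z kk \<alpha>" "sob_w n kk \<beta>" "sob_m n kk"
    by (rule sob_krylov_setup)
  have ip: "sob_ip n z kk \<beta> \<alpha> = (\<lambda>p q. krylov_vec p \<bullet>c krylov_vec q)"
    by (simp add: fun_eq_iff krylov_vec_def sob_ip_eq_cinner)
  have grade: "\<forall>p. degree p < sob_m n kk \<longrightarrow> krylov_vec p = 0\<^sub>v (sob_m n kk) \<longrightarrow> p = 0"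
    using sob_full_grade[OF assms(2-4)] by (auto simp: krylov_vec_def)
  show ?thesis
    using arnoldi_iff_sobolev_orthonormal[OF grade assms(5,6)]
    unfolding ip krylov_vec_def[symmetric] Let_def by (blast dest: dual_order.strict_implies_not_eq)
qed

end
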